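(* Let $k$ be an algebraically closed field of characteristic $p$, $f\ge1$ an integer, and for each $i\in\mathbf Z/f\mathbf Z$ let $W_i$ be a $k$-vector space of dimension $m>0$ (the same $m$ for all $i$). For each $i\in\mathbf Z/f\mathbf Z$ let $\varphi_i:W_{i-1}\to W_i$ be semilinear with respect to an automorphism $\sigma_i$ of $k$ and $\psi_i:W_i\to W_{i-1}$ be semilinear with respect to an automorphism $\tau_i$ of $k$, where each $\sigma_i,\tau_i$ is an integral (positive, negative or zero) power of the Frobenius automorphism $x\mapsto x^p$ of $k$. Assume $\psi_i\circ\varphi_i=0$ and $\varphi_i\circ\psi_i=0$ for all $i$. Then there exist lines $\ell_i\subset W_i$ ($i\in\mathbf Z/f\mathbf Z$) such that $\varphi_i(\ell_{i-1})\subset\ell_i$ and $\psi_i(\ell_i)\subset\ell_{i-1}$ for all $i\in\mathbf Z/f\mathbf Z$. *)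

theory Defs
  imports "HOL-Computational_Algebra.Computational_Algebra"
begin

text \<open>Integral powers of the Frobenius x \<mapsto> x^p: for n \<ge> 0 the map x \<mapsto> x^(p^n),
  for n < 0 the inverse of x \<mapsto> x^(p^(-n)) (a bijection on a perfect field).\<close>
definition frob_pow :: "nat \<Rightarrow> int \<Rightarrow> 'k::field \<Rightarrow> 'k" where
  "frob_pow p n = (if 0 \<le> n then (\<lambda>x. x ^ (p ^ nat n))
                    else inv (\<lambda>x. x ^ (p ^ nat (- n))))"

definition semilinear_on ::
  "('k \<Rightarrow> 'v \<Rightarrow> 'v) \<Rightarrow> ('k \<Rightarrow> 'k) \<Rightarrow> 'v set \<Rightarrow> 'v set \<Rightarrow> ('v \<Rightarrow> 'v::ab_group_add) \<Rightarrow> bool" where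
  "semilinear_on s \<sigma> A B h \<longleftrightarrow>
     (\<forall>x\<in>A. h x \<in> B) \<and> (\<forall>x\<in>A. \<forall>y\<in>A. h (x + y) = h x + h y) \<and>
     (\<forall>c. \<forall>x\<in>A. h (s c x) = s (\<sigma> c) (h x))"

text \<open>Predecessor in Z/fZ, indices represented by 0..<f.\<close>
definition predf :: "nat \<Rightarrow> nat \<Rightarrow> nat" where
  "predf f i = (i + f - 1) mod f"

end

theory Submission
  imports Defs
begin

text \<open>
  The vertices are organised as an abstract cycle, so that two neighbouring vertices can be merged
  by composing the maps between them. For a single cycle of Frobenius-semilinear maps
  \<open>g u : K (prv u) \<rightarrow> K u\<close> between nonzero finite-dimensional spaces, compatible lines exist:
  if some \<open>g u\<close> vanishes, or if all \<open>g u\<close> are bijective, merge vertices until one is left, where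
  a Frobenius-semilinear endomorphism has an eigenvector because the field is algebraically closed
  (look for it in the span of \<open>v, F v, F (F v), \<dots>\<close>; the coefficients are found as roots of
  a polynomial); otherwise replace every space by the image of the incoming map and induct on the
  total dimension.

  For the pair \<open>\<phi>, \<psi>\<close>: if every \<open>\<psi> u\<close> has a kernel, the kernels are \<open>\<phi>\<close>-stable since
  \<open>\<psi> \<circ> \<phi> = 0\<close>, and the lines found in them are killed by \<open>\<psi>\<close>; symmetrically if every \<open>\<phi> u\<close>
  has a kernel. Otherwise some \<open>\<phi> x\<close> is injective, hence bijective since all spaces have the
  same dimension, so \<open>\<psi> x = 0\<close>; then \<open>x\<close> is removed by replacing \<open>\<phi>\<close> and \<open>\<psi>\<close> at \<open>nxt x\<close> by
  \<open>\<phi> (nxt x) \<circ> \<phi> x\<close> and \<open>(\<phi> x)\<inverse> \<circ> \<psi> (nxt x)\<close>, and one inducts on the number of vertices.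
\<close>

section \<open>Integral powers of the Frobenius\<close>

lemma char_power_inj:
  fixes x y :: "'k::field"
  assumes "prime CHAR('k)" and "x ^ CHAR('k) ^ k = y ^ CHAR('k) ^ k"
  shows "x = y"
proof -
  have "((x - y) + y) ^ CHAR('k) ^ k = (x - y) ^ CHAR('k) ^ k + y ^ CHAR('k) ^ k"
    by (rule freshmans_dream'[OF assms(1) refl])
  then have "(x - y) ^ CHAR('k) ^ k = 0"
    using assms(2) by simp
  then show ?thesis
    by simp
qed

lemma frob_pow_power:
  fixes x :: "'k::alg_closed_field"
  assumes "prime CHAR('k)" and "0 \<le> n + int k"
  shows "frob_pow CHAR('k) n x ^ CHAR('k) ^ k = x ^ CHAR('k) ^ nat (n + int k)"
proof (cases "0 \<le> n")
  case True
  then have "nat (n + int k) = nat n + k"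
    by simp
  with True show ?thesis
    by (simp add: frob_pow_def power_add power_mult)
next
  case False
  define N where "N = nat (- n)"
  have "\<exists>y. y ^ CHAR('k) ^ N = z" for z :: 'k
    using assms(1) by (intro nth_root_exists) (simp add: prime_gt_0_nat)
  then have "surj (\<lambda>y::'k. y ^ CHAR('k) ^ N)"
    by (metis surjI)
  from surj_f_inv_f[OF this, of x] False
  have root: "frob_pow CHAR('k) n x ^ CHAR('k) ^ N = x"
    by (simp add: frob_pow_def N_def)
  define j where "j = nat (n + int k)"
  have "k = N + j"
    using False assms(2) by (simp add: N_def j_def)
  then show ?thesis
    unfolding j_def[symmetric] by (simp add: power_add power_mult root)
qed

lemma frob_pow_add:
  fixes x :: "'k::alg_closed_field"
  assumes "prime CHAR('k)"
  shows "frob_pow CHAR('k) m (frob_pow CHAR('k) n x) = frob_pow CHAR('k) (m + n) x"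
proof -
  define k where "k = nat \<bar>m\<bar> + nat \<bar>n\<bar>"
  have k: "0 \<le> m + int k" "0 \<le> n + int (nat (m + int k))" "0 \<le> m + n + int k"
    "nat (n + int (nat (m + int k))) = nat (m + n + int k)"
    unfolding k_def by arith+
  have "frob_pow CHAR('k) m (frob_pow CHAR('k) n x) ^ CHAR('k) ^ k
      = frob_pow CHAR('k) n x ^ CHAR('k) ^ nat (m + int k)"
    by (rule frob_pow_power[OF assms k(1)])
  also have "\<dots> = x ^ CHAR('k) ^ nat (m + n + int k)"
    unfolding frob_pow_power[OF assms k(2)] k(4) ..
  also have "\<dots> = frob_pow CHAR('k) (m + n) x ^ CHAR('k) ^ k"
    by (rule frob_pow_power[OF assms k(3), symmetric])
  finally show ?thesis
    by (rule char_power_inj[OF assms])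
qed

lemma frob_pow_inverse:
  fixes x :: "'k::alg_closed_field"
  assumes "prime CHAR('k)"
  shows "frob_pow CHAR('k) n (frob_pow CHAR('k) (- n) x) = x"
  unfolding frob_pow_add[OF assms] by (simp add: frob_pow_def)

lemma surj_frob_pow:
  assumes "prime CHAR('k::alg_closed_field)"
  shows "surj (frob_pow CHAR('k) n :: 'k \<Rightarrow> 'k)"
  by (rule surjI) (rule frob_pow_inverse[OF assms])

section \<open>Semilinear maps\<close>

context vector_space
begin

lemma semilinear_on_into: "semilinear_on scale \<sigma> A B h \<Longrightarrow> x \<in> A \<Longrightarrow> h x \<in> B"
  by (simp add: semilinear_on_def)

lemma semilinear_on_add:
  "semilinear_on scale \<sigma> A B h \<Longrightarrow> x \<in> A \<Longrightarrow> y \<in> A \<Longrightarrow> h (x + y) = h x + h y"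
  by (simp add: semilinear_on_def)

lemma semilinear_on_scale: "semilinear_on scale \<sigma> A B h \<Longrightarrow> x \<in> A \<Longrightarrow> h (c *s x) = \<sigma> c *s h x"
  by (simp add: semilinear_on_def)

lemma semilinear_on_zero:
  assumes "semilinear_on scale \<sigma> A B h" and "subspace A"
  shows "h 0 = 0"
  using semilinear_on_add[OF assms(1), of 0 0] subspace_0[OF assms(2)] by simp

lemma semilinear_on_sum_scale:
  assumes "semilinear_on scale \<sigma> A B h" and "subspace A" and "\<And>i. i \<in> I \<Longrightarrow> x i \<in> A"
  shows "h (\<Sum>i\<in>I. c i *s x i) = (\<Sum>i\<in>I. \<sigma> (c i) *s h (x i))"
  using assms(3)
proof (induction I rule: infinite_finite_induct)
  case (insert i I)
  have "(\<Sum>j\<in>I. c j *s x j) \<in> A"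
    using insert.prems by (intro subspace_sum[OF assms(2)] subspace_scale[OF assms(2)]) auto
  with insert show ?case
    using subspace_scale[OF assms(2)] by (simp add: semilinear_on_add[OF assms(1)] semilinear_on_scale[OF assms(1)])
qed (simp_all add: semilinear_on_zero[OF assms(1,2)])

lemma semilinear_on_inj_onI:
  assumes "semilinear_on scale \<sigma> A B h" and "subspace A" and "\<And>x. x \<in> A \<Longrightarrow> h x = 0 \<Longrightarrow> x = 0"
  shows "inj_on h A"
proof (rule inj_onI)
  fix x y assume xy: "x \<in> A" "y \<in> A" "h x = h y"
  have "h (x - y) + h y = h x"
    using semilinear_on_add[OF assms(1) subspace_diff[OF assms(2) xy(1,2)] xy(2)] by simp
  then have "x - y = 0"
    using xy assms(3)[OF subspace_diff[OF assms(2) xy(1,2)]] by simp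
  then show "x = y"
    by simp
qed

lemma subspace_semilinear_image:
  assumes "semilinear_on scale \<sigma> A B h" and "subspace A" and "surj \<sigma>"
  shows "subspace (h ` A)"
  unfolding subspace_def
proof (intro conjI ballI allI)
  show "0 \<in> h ` A"
    using semilinear_on_zero[OF assms(1,2)] subspace_0[OF assms(2)] by force
  show "x + y \<in> h ` A" if xy: "x \<in> h ` A" "y \<in> h ` A" for x y
  proof -
    obtain a b where "a \<in> A" "b \<in> A" "x = h a" "y = h b"
      using xy by blast
    then show ?thesis
      using semilinear_on_add[OF assms(1)] subspace_add[OF assms(2)] by (metis image_eqI)
  qed
  show "c *s x \<in> h ` A" if x: "x \<in> h ` A" for c x
  proof -
    obtain y where "x = h y" "y \<in> A"
      using x by blast
    moreover obtain d where "c = \<sigma> d"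
      using assms(3) by (metis surjD)
    ultimately have "c *s x = h (d *s y)" and "d *s y \<in> A"
      using semilinear_on_scale[OF assms(1)] subspace_scale[OF assms(2)] by auto
    then show ?thesis
      by blast
  qed
qed

lemma subspace_semilinear_kernel:
  assumes "semilinear_on scale \<sigma> A B h" and "subspace A"
  shows "subspace {x \<in> A. h x = 0}"
  using assms semilinear_on_zero[OF assms] subspace_0[OF assms(2)] subspace_add[OF assms(2)] subspace_scale[OF assms(2)]
  by (auto simp: subspace_def semilinear_on_def)

lemma semilinear_on_comp:
  "semilinear_on scale \<sigma> A B h \<Longrightarrow> semilinear_on scale \<tau> B C g \<Longrightarrow>
    semilinear_on scale (\<tau> \<circ> \<sigma>) A C (g \<circ> h)"
  by (simp add: semilinear_on_def)

lemma semilinear_on_subset: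
  "semilinear_on scale \<sigma> A B h \<Longrightarrow> A' \<subseteq> A \<Longrightarrow> h ` A' \<subseteq> B' \<Longrightarrow> semilinear_on scale \<sigma> A' B' h"
  unfolding semilinear_on_def image_subset_iff subset_iff by blast

lemma semilinear_on_inv_into:
  assumes "semilinear_on scale \<sigma> A B h" and "subspace A" and "bij_betw h A B"
    and "\<And>c. \<sigma> (\<tau> c) = c"
  shows "semilinear_on scale \<tau> B A (inv_into A h)"
proof -
  have inv: "inv_into A h y \<in> A" "h (inv_into A h y) = y" if "y \<in> B" for y
    using that assms(3) by (auto simp: bij_betw_def inv_into_into f_inv_into_f)
  have cancel: "inv_into A h (h x) = x" if "x \<in> A" for x
    using that assms(3) by (simp add: bij_betw_def)
  show ?thesis
    unfolding semilinear_on_def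
  proof (intro conjI ballI allI)
    show "inv_into A h y \<in> A" if "y \<in> B" for y
      using inv that by blast
    show "inv_into A h (x + y) = inv_into A h x + inv_into A h y" if "x \<in> B" "y \<in> B" for x y
      using cancel[OF subspace_add[OF assms(2) inv(1)[OF that(1)] inv(1)[OF that(2)]]]
        semilinear_on_add[OF assms(1) inv(1)[OF that(1)] inv(1)[OF that(2)]] inv(2) that by simp
    show "inv_into A h (c *s x) = \<tau> c *s inv_into A h x" if "x \<in> B" for c x
    proof -
      have "h (\<tau> c *s inv_into A h x) = c *s x"
        using semilinear_on_scale[OF assms(1) inv(1)[OF that]] inv(2)[OF that] assms(4) by simp
      then show ?thesis
        using cancel[OF subspace_scale[OF assms(2) inv(1)[OF that]], of "\<tau> c"] by simp
    qed
  qed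
qed

lemma semilinear_image_span:
  assumes "semilinear_on scale \<sigma> A B h" and "subspace A" and "finite S" and "S \<subseteq> A"
  shows "h ` span S \<subseteq> span (h ` S)"
proof
  fix y assume "y \<in> h ` span S"
  then obtain c where "y = h (\<Sum>v\<in>S. c v *s v)"
    using span_finite[OF assms(3)] by auto
  also have "\<dots> = (\<Sum>v\<in>S. \<sigma> (c v) *s h v)"
    using assms(4) by (intro semilinear_on_sum_scale[OF assms(1,2)]) auto
  also have "\<dots> \<in> span (h ` S)"
    by (intro span_sum span_scale span_base) auto
  finally show "y \<in> span (h ` S)" .
qed

lemma semilinear_image_span_singleton:
  assumes "semilinear_on scale \<sigma> A B h" and "x \<in> A" and "h x \<in> span {y}"
  shows "h ` span {x} \<subseteq> span {y}"
  using assms semilinear_on_scale[OF assms(1,2)] by (auto simp: span_singleton)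

text \<open>Since \<open>card\<close> of an infinite set is \<open>0\<close>, the hypothesis \<open>0 < dim V\<close> says that \<open>V\<close> is
  nonzero and finite-dimensional; the ambient space itself may be infinite-dimensional.\<close>

lemma finite_basis_exists:
  assumes "0 < dim V"
  obtains B where "finite B" "independent B" "B \<subseteq> V" "V \<subseteq> span B" "card B = dim V"
proof -
  obtain B where "B \<subseteq> V" "independent B" "V \<subseteq> span B" "card B = dim V"
    by (rule basis_exists)
  moreover from this have "finite B"
    using assms card.infinite by force
  ultimately show ?thesis
    using that by blast
qed

lemma independent_bound_dim_pos:
  assumes "0 < dim V" and "A \<subseteq> V" and "independent A"
  shows "finite A" and "card A \<le> dim V"
proof -
  obtain B where "finite B" "V \<subseteq> span B" "card B = dim V"
    using finite_basis_exists[OF assms(1)] by metis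
  then show "finite A" and "card A \<le> dim V"
    using independent_span_bound[of B A] assms(2,3) by auto
qed

lemma independent_card_eq_dim_span:
  assumes "0 < dim V" and "A \<subseteq> V" and "independent A" and "card A = dim V"
  shows "V \<subseteq> span A"
proof
  fix y assume y: "y \<in> V"
  show "y \<in> span A"
  proof (rule ccontr)
    assume "y \<notin> span A"
    then have "independent (insert y A)" and "y \<notin> A"
      using independent_insertI[OF _ assms(3)] span_base by auto
    moreover have "insert y A \<subseteq> V"
      using y assms(2) by blast
    ultimately show False
      using independent_bound_dim_pos[OF assms(1)] independent_bound_dim_pos(1)[OF assms(1-3)] assms(4)
      by (metis card_insert_disjoint not_less_eq_eq order_refl)
  qed
qed

lemma dim_pos_imp_nonzero:
  assumes "0 < dim V"
  obtains x where "x \<in> V" and "x \<noteq> 0"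
proof (rule ccontr)
  assume "\<not> thesis"
  then have "V \<subseteq> span {}"
    using that by auto
  then show False
    using dim_le_card[of V "{}"] assms by simp
qed

lemma dim_subset_pos:
  assumes "T \<subseteq> S" and "0 < dim S"
  shows "dim T \<le> dim S"
proof -
  obtain B where "finite B" "S \<subseteq> span B" "card B = dim S"
    using finite_basis_exists[OF assms(2)] by metis
  then show ?thesis
    using dim_le_card[of T B] assms(1) by auto
qed

lemma dim_pos_of_nonzero:
  assumes "T \<subseteq> S" and "0 < dim S" and "x \<in> T" and "x \<noteq> 0"
  shows "0 < dim T"
proof -
  obtain A where A: "A \<subseteq> T" "independent A" "T \<subseteq> span A" "card A = dim T"
    by (rule basis_exists)
  have "finite A"
    using independent_bound_dim_pos(1)[OF assms(2) _ A(2)] A(1) assms(1) by blast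
  moreover have "A \<noteq> {}"
    using A(3) assms(3,4) by auto
  ultimately show ?thesis
    using A(4) card_gt_0_iff by metis
qed

lemma subspace_eq_of_dim_eq:
  assumes "subspace T" and "T \<subseteq> S" and "0 < dim S" and "dim T = dim S"
  shows "T = S"
proof -
  obtain A where A: "A \<subseteq> T" "independent A" "T \<subseteq> span A" "card A = dim T"
    by (rule basis_exists)
  then have "S \<subseteq> span A"
    using independent_card_eq_dim_span[OF assms(3)] assms(2,4) by auto
  also have "span A \<subseteq> T"
    using span_minimal[OF A(1) assms(1)] .
  finally show ?thesis
    using assms(2) by blast
qed

lemma dim_semilinear_image_le:
  assumes "semilinear_on scale \<sigma> A B h" and "subspace A" and "0 < dim A"
  shows "dim (h ` A) \<le> dim A"
proof -
  obtain C where C: "finite C" "C \<subseteq> A" "A \<subseteq> span C" "card C = dim A"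
    using finite_basis_exists[OF assms(3)] by metis
  have "h ` A \<subseteq> span (h ` C)"
    using semilinear_image_span[OF assms(1,2) C(1,2)] C(3) by blast
  then have "dim (h ` A) \<le> card (h ` C)"
    using dim_le_card C(1) by blast
  also have "\<dots> \<le> dim A"
    using card_image_le[OF C(1)] C(4) by simp
  finally show ?thesis .
qed

lemma dim_semilinear_image_less:
  assumes "semilinear_on scale \<sigma> A B h" and "subspace A" and "0 < dim A"
    and "x \<in> A" and "x \<noteq> 0" and "h x = 0"
  shows "dim (h ` A) < dim A"
proof -
  obtain C where C: "{x} \<subseteq> C" "C \<subseteq> A" "independent C" "A \<subseteq> span C"
    using maximal_independent_subset_extend[of "{x}" A] assms(4,5) by auto
  have fin: "finite C"
    using independent_bound_dim_pos(1)[OF assms(3) C(2,3)] .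
  have "h ` A \<subseteq> span (h ` C)"
    using semilinear_image_span[OF assms(1,2) fin C(2)] C(4) by blast
  also have "h ` C = insert 0 (h ` (C - {x}))"
    using C(1) assms(6) by auto
  finally have "h ` A \<subseteq> span (h ` (C - {x}))"
    by simp
  then have "dim (h ` A) \<le> card (h ` (C - {x}))"
    using dim_le_card fin by blast
  also have "\<dots> \<le> card (C - {x})"
    using fin by (intro card_image_le) simp
  also have "\<dots> < card C"
    using fin C(1) by (intro psubset_card_mono) auto
  also have "\<dots> = dim A"
    using basis_card_eq_dim[OF C(2,4,3)] .
  finally show ?thesis .
qed

lemma semilinear_inj_imp_surj:
  assumes h: "semilinear_on scale \<sigma> A B h" and "surj \<sigma>"
    and A: "subspace A" "0 < dim A" and B: "subspace B" "dim B = dim A"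
    and inj: "\<And>x. x \<in> A \<Longrightarrow> h x = 0 \<Longrightarrow> x = 0"
  shows "h ` A = B"
proof -
  have sub: "subspace (h ` A)" "h ` A \<subseteq> B"
    using subspace_semilinear_image[OF h A(1) \<open>surj \<sigma>\<close>] semilinear_on_into[OF h] by auto
  obtain x where "x \<in> A" "x \<noteq> 0"
    using dim_pos_imp_nonzero[OF A(2)] .
  then have "0 < dim (h ` A)"
    using dim_pos_of_nonzero[OF sub(2)] B(2) A(2) inj by auto
  have "bij_betw h A (h ` A)"
    using semilinear_on_inj_onI[OF h A(1) inj] by (simp add: bij_betw_def)
  then have "semilinear_on scale (inv \<sigma>) (h ` A) A (inv_into A h)"
    using semilinear_on_inv_into[OF semilinear_on_subset[OF h] A(1)] surj_f_inv_f[OF \<open>surj \<sigma>\<close>]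
    by blast
  moreover have "inv_into A h ` h ` A = A"
    using \<open>bij_betw h A (h ` A)\<close> by (simp add: bij_betw_def)
  ultimately have "dim A \<le> dim (h ` A)"
    using dim_semilinear_image_le[OF _ sub(1) \<open>0 < dim (h ` A)\<close>] by metis
  then have "dim (h ` A) = dim B"
    using dim_subset_pos[OF sub(2)] A(2) B(2) by simp
  then show ?thesis
    using subspace_eq_of_dim_eq[OF sub(1,2)] A(2) B(2) by simp
qed

lemma dim_span_singleton: "x \<noteq> 0 \<Longrightarrow> dim (span {x}) = 1"
  by (simp add: dim_span dim_eq_card_independent)

end

section \<open>Eigenvectors of Frobenius-semilinear endomorphisms\<close>

context vector_space
begin

lemma span_image_sum:
  assumes "finite I" and "x \<in> span (g ` I)"
  obtains c where "x = (\<Sum>i\<in>I. c i *s g i)"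
  using assms
proof (induction I arbitrary: x thesis rule: finite_induct)
  case empty
  then show ?case
    by simp
next
  case (insert i I)
  obtain k where "x - k *s g i \<in> span (g ` I)"
    using insert.prems(2) span_breakdown_eq by auto
  then obtain c where c: "x - k *s g i = (\<Sum>j\<in>I. c j *s g j)"
    using insert.IH by blast
  have "(\<Sum>j\<in>I. (c(i := k)) j *s g j) = (\<Sum>j\<in>I. c j *s g j)"
    using insert.hyps by (intro sum.cong) auto
  then have "x = (\<Sum>j\<in>insert i I. (c(i := k)) j *s g j)"
    using c insert.hyps by (simp add: algebra_simps)
  then show ?case
    by (rule insert.prems(1))
qed

lemma independent_sequence_prefix:
  fixes u :: "nat \<Rightarrow> 'b"
  assumes "\<And>d. d < N \<Longrightarrow> u d \<notin> span (u ` {..<d})"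
  shows "independent (u ` {..<N}) \<and> card (u ` {..<N}) = N"
  using assms
proof (induction N)
  case 0
  show ?case
    by (simp add: independent_empty)
next
  case (Suc N)
  have "u N \<notin> span (u ` {..<N})"
    using Suc.prems by simp
  moreover from this have "u N \<notin> u ` {..<N}"
    using span_base[of "u N" "u ` {..<N}"] by blast
  ultimately show ?case
    using Suc by (simp add: lessThan_Suc independent_insertI)
qed

lemma sequence_first_dependence:
  assumes "0 < dim V" and "\<And>j. u j \<in> V" and "u 0 \<noteq> 0"
  obtains e c where "u (Suc e) = (\<Sum>j<Suc e. c j *s u j)" and "u e \<notin> span (u ` {..<e})"
proof -
  have "\<exists>d. u d \<in> span (u ` {..<d})"
  proof (rule ccontr)
    assume "\<nexists>d. u d \<in> span (u ` {..<d})"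
    then have "independent (u ` {..<Suc (dim V)}) \<and> card (u ` {..<Suc (dim V)}) = Suc (dim V)"
      by (intro independent_sequence_prefix) blast
    moreover have "u ` {..<Suc (dim V)} \<subseteq> V"
      using assms(2) by blast
    ultimately show False
      using independent_bound_dim_pos(2)[OF assms(1), of "u ` {..<Suc (dim V)}"] by simp
  qed
  define d where "d = (LEAST d. u d \<in> span (u ` {..<d}))"
  have d: "u d \<in> span (u ` {..<d})"
    unfolding d_def using \<open>\<exists>d. u d \<in> span (u ` {..<d})\<close> by (rule LeastI_ex)
  have "d \<noteq> 0"
    using d assms(3) by (intro notI) simp
  then obtain e where e: "d = Suc e"
    using not0_implies_Suc by blast
  have "u e \<notin> span (u ` {..<e})"
  proof
    assume "u e \<in> span (u ` {..<e})"
    then have "d \<le> e"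
      unfolding d_def by (rule Least_le)
    then show False
      using e by simp
  qed
  moreover obtain c where "u (Suc e) = (\<Sum>j<Suc e. c j *s u j)"
    using d unfolding e by (rule span_image_sum[OF finite_lessThan])
  ultimately show ?thesis
    using that by blast
qed

lemma sum_scale_nonzero_of_last:
  assumes "u e \<notin> span (u ` {..<e})" and "y e \<noteq> 0"
  shows "(\<Sum>j<Suc e. y j *s u j) \<noteq> 0"
proof
  assume "(\<Sum>j<Suc e. y j *s u j) = 0"
  then have "y e *s u e = - (\<Sum>j<e. y j *s u j)"
    by (simp add: add_eq_0_iff2 add.commute)
  then have "u e = inverse (y e) *s - (\<Sum>j<e. y j *s u j)"
    using assms(2) by (metis scale_scale scale_one left_inverse)
  also have "\<dots> \<in> span (u ` {..<e})"
    by (intro span_scale span_neg span_sum span_base) auto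
  finally show False
    using assms(1) by simp
qed

lemma semilinear_cyclic_eigenvector:
  assumes F: "semilinear_on scale \<sigma> V V F" "subspace V"
    and u: "\<And>j. u j \<in> V" "\<And>j. F (u j) = u (Suc j)" "u (Suc e) = (\<Sum>j<Suc e. c j *s u j)"
    and y: "\<sigma> (y e) * c 0 = \<mu> * y 0" "\<And>j. j < e \<Longrightarrow> \<sigma> (y j) + \<sigma> (y e) * c (Suc j) = \<mu> * y (Suc j)"
  shows "F (\<Sum>j<Suc e. y j *s u j) = \<mu> *s (\<Sum>j<Suc e. y j *s u j)"
proof -
  have "F (\<Sum>j<Suc e. y j *s u j) = (\<Sum>j<Suc e. \<sigma> (y j) *s F (u j))"
    using u(1) by (rule semilinear_on_sum_scale[OF F])
  also have "\<dots> = (\<Sum>j<e. \<sigma> (y j) *s u (Suc j)) + \<sigma> (y e) *s u (Suc e)"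
    by (simp add: u(2))
  also have "\<dots> = (\<sigma> (y e) * c 0) *s u 0 + (\<Sum>j<e. (\<sigma> (y j) + \<sigma> (y e) * c (Suc j)) *s u (Suc j))"
    unfolding u(3) sum.lessThan_Suc_shift
    by (simp add: scale_sum_right scale_left_distrib sum.distrib algebra_simps)
  also have "\<dots> = (\<mu> * y 0) *s u 0 + (\<Sum>j<e. (\<mu> * y (Suc j)) *s u (Suc j))"
    using y by simp
  also have "\<dots> = \<mu> *s (\<Sum>j<Suc e. y j *s u j)"
    unfolding sum.lessThan_Suc_shift by (simp add: scale_right_distrib scale_sum_right)
  finally show ?thesis .
qed

lemma iterates_first_dependence:
  assumes "0 < dim V" and "\<And>x. x \<in> V \<Longrightarrow> F x \<in> V"
  obtains u e c where "\<And>j. u j \<in> V" and "\<And>j. F (u j) = u (Suc j)"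
    and "u (Suc e) = (\<Sum>j<Suc e. c j *s u j)" and "u e \<notin> span (u ` {..<e})"
proof -
  obtain v where v: "v \<in> V" "v \<noteq> 0"
    using dim_pos_imp_nonzero[OF assms(1)] .
  define u where "u j = (F ^^ j) v" for j
  have "u j \<in> V" for j
    by (induction j) (simp_all add: u_def v(1) assms(2))
  moreover have "u 0 \<noteq> 0"
    using v(2) by (simp add: u_def)
  ultimately obtain e c where "u (Suc e) = (\<Sum>j<Suc e. c j *s u j)" "u e \<notin> span (u ` {..<e})"
    using sequence_first_dependence[OF assms(1)] by blast
  moreover have "F (u j) = u (Suc j)" for j
    by (simp add: u_def)
  ultimately show ?thesis
    using that \<open>\<And>j. u j \<in> V\<close> by blast
qed

end

text \<open>Back substitution in the eigenvector recurrence of a companion matrix: the coefficient of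
  \<open>u (e - k)\<close> in an eigenvector with eigenvalue \<open>\<mu>\<close> is \<open>poly (companion_poly c e k) \<mu>\<close>.\<close>

primrec companion_poly :: "(nat \<Rightarrow> 'a::comm_ring_1) \<Rightarrow> nat \<Rightarrow> nat \<Rightarrow> 'a poly" where
  "companion_poly c e 0 = 1"
| "companion_poly c e (Suc k) = pCons 0 (companion_poly c e k) - [:c (e - k):]"

lemma coeff_companion_poly_self: "coeff (companion_poly c e k) k = 1"
  by (induction k) (simp_all add: coeff_pCons)

lemma companion_recurrence_solvable:
  fixes c :: "nat \<Rightarrow> 'k::alg_closed_field"
  obtains \<mu> y where "y e = 1" and "y e * c 0 = \<mu> * y 0"
    and "\<And>j. j < e \<Longrightarrow> y j + y e * c (Suc j) = \<mu> * y (Suc j)"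
proof -
  define P where "P = pCons 0 (companion_poly c e e) - [:c 0:]"
  have "coeff P (Suc e) = 1"
    by (simp add: P_def coeff_companion_poly_self)
  then have "0 < degree P"
    using le_degree[of P "Suc e"] by simp
  then obtain \<mu> where \<mu>: "poly P \<mu> = 0"
    using alg_closed_imp_poly_has_root by blast
  define y where "y j = poly (companion_poly c e (e - j)) \<mu>" for j
  have "y j + y e * c (Suc j) = \<mu> * y (Suc j)" if "j < e" for j
  proof -
    have "e - j = Suc (e - Suc j)" and "e - (e - Suc j) = Suc j"
      using that by simp_all
    then show ?thesis
      by (simp add: y_def)
  qed
  moreover have "y e * c 0 = \<mu> * y 0"
    using \<mu> by (simp add: P_def y_def)
  ultimately show ?thesis
    using that[of "y" \<mu>] by (simp add: y_def)
qed

lemma frobenius_polynomial_nonzero_root: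
  fixes c :: "nat \<Rightarrow> 'k::alg_closed_field"
  assumes "prime CHAR('k)" and "0 < k" and "c 0 \<noteq> 0"
  defines "Q \<equiv> CHAR('k) ^ k"
  obtains r where "r \<noteq> 0" and "(\<Sum>i\<le>e. c i ^ Q ^ (e - i) * r ^ Q ^ Suc (e - i)) = r"
proof -
  have "1 < Q"
    using one_less_power[OF prime_gt_1_nat[OF assms(1)] assms(2)] by (simp add: Q_def)
  define D where "D i = Q ^ Suc (e - i) - 1" for i
  have D_Suc: "Suc (D i) = Q ^ Suc (e - i)" and D_pos: "0 < D i" for i
    using one_less_power[OF \<open>1 < Q\<close>, of "Suc (e - i)"] by (simp_all add: D_def)
  have D_eq_iff: "D i = D 0 \<longleftrightarrow> i = 0" if "i \<le> e" for i
  proof -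
    have "D i = D 0 \<longleftrightarrow> Q ^ Suc (e - i) = Q ^ Suc e"
      using D_Suc[of i] D_Suc[of 0] by (metis Suc_inject diff_zero)
    then show ?thesis
      using that \<open>1 < Q\<close> by auto
  qed
  define R where "R = (\<Sum>i\<le>e. monom (c i ^ Q ^ (e - i)) (D i)) - 1"
  have "coeff R (D 0) = (\<Sum>i\<le>e. if i = 0 then c i ^ Q ^ (e - i) else 0)"
    using D_pos[of 0] D_eq_iff unfolding R_def by (auto simp: coeff_sum coeff_monom intro!: sum.cong)
  also have "\<dots> \<noteq> 0"
    using assms(3) by simp
  finally have "0 < degree R"
    using D_pos[of 0] le_degree[of R "D 0"] by linarith
  then obtain r where r: "poly R r = 0"
    using alg_closed_imp_poly_has_root by blast
  then have sum1: "(\<Sum>i\<le>e. c i ^ Q ^ (e - i) * r ^ D i) = 1"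
    by (simp add: R_def poly_sum poly_monom)
  then have "r \<noteq> 0"
    by (intro notI) (simp add: zero_power D_pos)
  moreover have "r ^ Q ^ Suc (e - i) = r * r ^ D i" for i
    unfolding D_Suc[symmetric] by simp
  then have "(\<Sum>i\<le>e. c i ^ Q ^ (e - i) * r ^ Q ^ Suc (e - i)) = r"
    using sum1 by (simp add: sum_distrib_left algebra_simps flip: sum_distrib_left)
  ultimately show ?thesis
    using that by blast
qed

lemma frobenius_recurrence_solvable:
  fixes c :: "nat \<Rightarrow> 'k::alg_closed_field"
  assumes "prime CHAR('k)" and "0 < k" and "c 0 \<noteq> 0"
  defines "Q \<equiv> CHAR('k) ^ k"
  obtains y where "y e \<noteq> 0" and "y e ^ Q * c 0 = y 0"
    and "\<And>j. j < e \<Longrightarrow> y j ^ Q + y e ^ Q * c (Suc j) = y (Suc j)"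
proof -
  obtain r where r: "r \<noteq> 0" "(\<Sum>i\<le>e. c i ^ Q ^ (e - i) * r ^ Q ^ Suc (e - i)) = r"
    using frobenius_polynomial_nonzero_root[where c = c and k = k and e = e, OF assms(1-3)]
    unfolding Q_def by blast
  define y where "y j = (\<Sum>i\<le>j. c i ^ Q ^ (j - i) * r ^ Q ^ Suc (j - i))" for j
  have "y j ^ Q = (\<Sum>i\<le>j. c i ^ Q ^ (Suc j - i) * r ^ Q ^ Suc (Suc j - i))" for j
  proof -
    have "y j ^ Q = (\<Sum>i\<le>j. (c i ^ Q ^ (j - i) * r ^ Q ^ Suc (j - i)) ^ Q)"
      unfolding y_def by (rule freshmans_dream_sum'[OF assms(1)]) (simp add: Q_def)
    also have "\<dots> = (\<Sum>i\<le>j. c i ^ Q ^ (Suc j - i) * r ^ Q ^ Suc (Suc j - i))"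
      by (intro sum.cong refl) (simp add: Suc_diff_le power_mult_distrib ac_simps flip: power_mult)
    finally show ?thesis .
  qed
  moreover have ye: "y e = r"
    using r(2) by (simp add: y_def)
  ultimately have "y j ^ Q + y e ^ Q * c (Suc j) = y (Suc j)" for j
    by (simp add: y_def mult.commute)
  moreover have "y e ^ Q * c 0 = y 0"
    unfolding ye by (simp add: y_def mult.commute)
  ultimately show ?thesis
    using that r(1) ye by blast
qed

locale alg_closed_vector_space = vector_space scale
  for scale :: "'a::alg_closed_field \<Rightarrow> 'b::ab_group_add \<Rightarrow> 'b" (infixr "*s" 75)
begin

lemma linear_eigenvector_exists:
  assumes F: "semilinear_on scale id V V F" and V: "subspace V" "0 < dim V"
  obtains w \<mu> where "w \<in> V" and "w \<noteq> 0" and "F w = \<mu> *s w"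
proof -
  obtain u e c where u: "\<And>j. u j \<in> V" "\<And>j. F (u j) = u (Suc j)"
    "u (Suc e) = (\<Sum>j<Suc e. c j *s u j)" "u e \<notin> span (u ` {..<e})"
    using iterates_first_dependence[where F = F, OF V(2) semilinear_on_into[OF F]] by blast
  obtain \<mu> y where y: "y e = 1" "y e * c 0 = \<mu> * y 0"
    "\<And>j. j < e \<Longrightarrow> y j + y e * c (Suc j) = \<mu> * y (Suc j)"
    using companion_recurrence_solvable[where c = c and e = e] by blast
  have "F (\<Sum>j<Suc e. y j *s u j) = \<mu> *s (\<Sum>j<Suc e. y j *s u j)"
    using y by (intro semilinear_cyclic_eigenvector[OF F V(1) u(1-3)]) simp_all
  moreover have "(\<Sum>j<Suc e. y j *s u j) \<noteq> 0"
    by (rule sum_scale_nonzero_of_last[where u = u and e = e and y = y, OF u(4)]) (simp add: y(1))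
  moreover have "(\<Sum>j<Suc e. y j *s u j) \<in> V"
    using u(1) by (intro subspace_sum[OF V(1)] subspace_scale[OF V(1)])
  ultimately show ?thesis
    using that by blast
qed

end

locale prime_char_vector_space = alg_closed_vector_space +
  assumes prime_char: "prime CHAR('a)"
begin

lemma frobenius_fixed_vector_exists:
  assumes F: "semilinear_on scale (\<lambda>c. c ^ CHAR('a) ^ k) V V F" and "0 < k"
    and V: "subspace V" "0 < dim V" and inj: "\<And>x. x \<in> V \<Longrightarrow> F x = 0 \<Longrightarrow> x = 0"
  obtains w where "w \<in> V" and "w \<noteq> 0" and "F w = w"
proof -
  obtain u e c where u: "\<And>j. u j \<in> V" "\<And>j. F (u j) = u (Suc j)"
    "u (Suc e) = (\<Sum>j<Suc e. c j *s u j)" "u e \<notin> span (u ` {..<e})"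
    using iterates_first_dependence[where F = F, OF V(2) semilinear_on_into[OF F]] by blast
  have "c 0 \<noteq> 0"
  proof
    assume "c 0 = 0"
    have "\<forall>j. \<exists>t. t ^ CHAR('a) ^ k = c (Suc j)"
      using prime_char by (intro allI nth_root_exists) (simp add: prime_gt_0_nat)
    then obtain t where t: "\<forall>j. t j ^ CHAR('a) ^ k = c (Suc j)"
      by (rule choice[THEN exE])
    have "F (u e) = c 0 *s u 0 + (\<Sum>j<e. c (Suc j) *s u (Suc j))"
      by (simp only: u(2) u(3) sum.lessThan_Suc_shift)
    also have "\<dots> = (\<Sum>j<e. t j ^ CHAR('a) ^ k *s F (u j))"
      using \<open>c 0 = 0\<close> by (simp add: t u(2))
    also have "\<dots> = F (\<Sum>j<e. t j *s u j)"
      using u(1) by (intro semilinear_on_sum_scale[OF F V(1), symmetric])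
    finally have "u e = (\<Sum>j<e. t j *s u j)"
      using semilinear_on_inj_onI[OF F V(1) inj] u(1)
      by (auto intro: subspace_sum[OF V(1)] subspace_scale[OF V(1)] dest: inj_onD)
    also have "\<dots> \<in> span (u ` {..<e})"
      by (intro span_sum span_scale span_base) auto
    finally show False
      using u(4) by simp
  qed
  then obtain y where y: "y e \<noteq> 0" "y e ^ CHAR('a) ^ k * c 0 = y 0"
    "\<And>j. j < e \<Longrightarrow> y j ^ CHAR('a) ^ k + y e ^ CHAR('a) ^ k * c (Suc j) = y (Suc j)"
    using frobenius_recurrence_solvable[OF prime_char \<open>0 < k\<close>] by metis
  have "F (\<Sum>j<Suc e. y j *s u j) = 1 *s (\<Sum>j<Suc e. y j *s u j)"
    using y by (intro semilinear_cyclic_eigenvector[OF F V(1) u(1-3)]) simp_all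
  moreover have "(\<Sum>j<Suc e. y j *s u j) \<noteq> 0"
    by (rule sum_scale_nonzero_of_last[where u = u and e = e and y = y, OF u(4) y(1)])
  moreover have "(\<Sum>j<Suc e. y j *s u j) \<in> V"
    using u(1) by (intro subspace_sum[OF V(1)] subspace_scale[OF V(1)])
  ultimately show ?thesis
    using that by simp
qed

lemma semilinear_fixed_vector_exists:
  assumes F: "semilinear_on scale (frob_pow CHAR('a) n) V V F" and "n \<noteq> 0"
    and V: "subspace V" "0 < dim V" and inj: "\<And>x. x \<in> V \<Longrightarrow> F x = 0 \<Longrightarrow> x = 0"
  obtains w where "w \<in> V" and "w \<noteq> 0" and "F w = w"
proof (cases "0 < n")
  case True
  then have frob: "frob_pow CHAR('a) n = (\<lambda>c. c ^ CHAR('a) ^ nat n)"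
    by (simp add: frob_pow_def)
  have "0 < nat n"
    using True by simp
  show ?thesis
    by (rule frobenius_fixed_vector_exists[where F = F, OF F[unfolded frob] \<open>0 < nat n\<close> V inj that])
next
  case False
  txt \<open>Then \<open>F\<close> is bijective, and a fixed vector of its inverse is one of \<open>F\<close>.\<close>
  have surj: "F ` V = V"
    using semilinear_inj_imp_surj[OF F surj_frob_pow[OF prime_char] V V(1) refl inj] .
  then have "bij_betw F V V"
    using semilinear_on_inj_onI[OF F V(1) inj] by (simp add: bij_betw_def)
  then have G: "semilinear_on scale (frob_pow CHAR('a) (- n)) V V (inv_into V F)"
    by (rule semilinear_on_inv_into[OF F V(1) _ frob_pow_inverse[OF prime_char]])
  have frob: "frob_pow CHAR('a) (- n) = (\<lambda>c. c ^ CHAR('a) ^ nat (- n))"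
    using False by (simp add: frob_pow_def)
  have FG: "F (inv_into V F y) = y" if "y \<in> V" for y
    using that surj by (simp add: f_inv_into_f)
  have inj_G: "y = 0" if "y \<in> V" "inv_into V F y = 0" for y
    using FG[OF that(1)] that(2) semilinear_on_zero[OF F V(1)] by simp
  have "0 < nat (- n)"
    using False \<open>n \<noteq> 0\<close> by simp
  obtain w where "w \<in> V" "w \<noteq> 0" "inv_into V F w = w"
    by (rule frobenius_fixed_vector_exists[where F = "inv_into V F", OF G[unfolded frob] \<open>0 < nat (- n)\<close> V inj_G])
  then show ?thesis
    using that FG[of w] by simp
qed

lemma semilinear_eigenvector_exists:
  assumes F: "semilinear_on scale (frob_pow CHAR('a) n) V V F" and V: "subspace V" "0 < dim V"
  obtains w where "w \<in> V" and "w \<noteq> 0" and "F w \<in> span {w}"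
proof -
  consider (ker) x where "x \<in> V" "x \<noteq> 0" "F x = 0"
    | (lin) "n = 0" "\<And>x. x \<in> V \<Longrightarrow> F x = 0 \<Longrightarrow> x = 0"
    | (frob) "n \<noteq> 0" "\<And>x. x \<in> V \<Longrightarrow> F x = 0 \<Longrightarrow> x = 0"
    by blast
  then show ?thesis
  proof cases
    case ker
    then show ?thesis
      using that[of x] span_zero by simp
  next
    case lin
    then have "frob_pow CHAR('a) n = id"
      by (simp add: frob_pow_def fun_eq_iff)
    then obtain w \<mu> where "w \<in> V" "w \<noteq> 0" "F w = \<mu> *s w"
      using linear_eigenvector_exists[OF _ V] F by metis
    then show ?thesis
      using that span_scale[OF span_base[of w "{w}"]] by simp
  next
    case frob
    then obtain w where "w \<in> V" "w \<noteq> 0" "F w = w"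
      using semilinear_fixed_vector_exists[OF F _ V] by blast
    then show ?thesis
      using that span_base[of w "{w}"] by simp
  qed
qed

end

section \<open>Cyclic orders\<close>

text \<open>A cyclic order on \<open>V\<close>: \<open>nxt\<close> and \<open>prv\<close> are mutually inverse on \<open>V\<close>, and \<open>V\<close> is a single
  \<open>nxt\<close>-orbit, expressed as the absence of proper nonempty \<open>nxt\<close>-closed subsets.\<close>

definition cycle_on :: "'a set \<Rightarrow> ('a \<Rightarrow> 'a) \<Rightarrow> ('a \<Rightarrow> 'a) \<Rightarrow> bool" where
  "cycle_on V nxt prv \<longleftrightarrow>
     (\<forall>u\<in>V. nxt u \<in> V \<and> prv u \<in> V \<and> prv (nxt u) = u \<and> nxt (prv u) = u) \<and>
     (\<forall>S\<subseteq>V. S \<noteq> {} \<longrightarrow> nxt ` S \<subseteq> S \<longrightarrow> S = V)"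

lemma cycle_onD:
  assumes "cycle_on V nxt prv" and "u \<in> V"
  shows "nxt u \<in> V" and "prv u \<in> V" and "prv (nxt u) = u" and "nxt (prv u) = u"
  using assms by (simp_all add: cycle_on_def)

lemma cycle_on_closed_subset:
  "cycle_on V nxt prv \<Longrightarrow> S \<subseteq> V \<Longrightarrow> S \<noteq> {} \<Longrightarrow> nxt ` S \<subseteq> S \<Longrightarrow> S = V"
  by (simp add: cycle_on_def)

lemma cycle_on_reverse:
  assumes cyc: "cycle_on V nxt prv"
  shows "cycle_on V prv nxt"
proof -
  have "S = V" if S: "S \<subseteq> V" "S \<noteq> {}" "prv ` S \<subseteq> S" for S
  proof (rule ccontr)
    assume "S \<noteq> V"
    have "nxt ` (V - S) \<subseteq> V - S"
      using S(3) cycle_onD[OF cyc] by (force simp: image_subset_iff)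
    then have "V - S = V"
      using \<open>S \<noteq> V\<close> S(1) by (intro cycle_on_closed_subset[OF cyc]) auto
    then show False
      using S(1,2) by blast
  qed
  then show ?thesis
    using cycle_onD[OF cyc] by (auto simp: cycle_on_def)
qed

lemma cycle_on_fixed_point:
  assumes cyc: "cycle_on V nxt prv" and "u \<in> V" and "prv u = u"
  shows "V = {u}"
  using cycle_on_closed_subset[OF cyc, of "{u}"] cycle_onD(4)[OF cyc \<open>u \<in> V\<close>] assms(2,3) by simp

lemma cycle_on_bij_betw_prv:
  assumes cyc: "cycle_on V nxt prv"
  shows "bij_betw prv V V"
  by (rule bij_betw_byWitness[where f' = nxt]) (use cycle_onD[OF cyc] in auto)

lemma cycle_on_remove_closed_subset:
  assumes cyc: "cycle_on V nxt prv" and "x \<in> V"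
    and S: "S \<subseteq> V - {x}" "S \<noteq> {}" "(nxt(prv x := nxt x)) ` S \<subseteq> S"
  shows "S = V - {x}"
proof (cases "prv x \<in> S")
  case True
  then have "nxt x \<in> S"
    using S(3) by auto
  then have "nxt ` insert x S \<subseteq> insert x S"
    using S(3) cycle_onD(4)[OF cyc \<open>x \<in> V\<close>] by (auto simp: image_subset_iff split: if_splits)
  then have "insert x S = V"
    using S(1) \<open>x \<in> V\<close> by (intro cycle_on_closed_subset[OF cyc]) auto
  then show ?thesis
    using S(1) by blast
next
  case False
  then have "nxt ` S \<subseteq> S"
    using S(3) by (auto simp: image_subset_iff split: if_splits)
  then have "S = V"
    using S(1,2) by (intro cycle_on_closed_subset[OF cyc]) auto
  then show ?thesis
    using S(1) \<open>x \<in> V\<close> by blast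
qed

lemma cycle_on_remove:
  assumes cyc: "cycle_on V nxt prv" and "x \<in> V" and "prv x \<noteq> x"
  shows "cycle_on (V - {x}) (nxt(prv x := nxt x)) (prv(nxt x := prv x))"
proof -
  note D = cycle_onD[OF cyc]
  let ?nxt = "nxt(prv x := nxt x)" and ?prv = "prv(nxt x := prv x)"
  have "nxt x \<noteq> x"
    using D(3)[OF \<open>x \<in> V\<close>] assms(3) by auto
  have "?nxt u \<in> V - {x}" and "?prv (?nxt u) = u" if "u \<in> V - {x}" for u
  proof -
    have "nxt u \<noteq> nxt x" and "u \<noteq> prv x \<Longrightarrow> nxt u \<noteq> x"
      using D(3)[of u] D(3)[OF \<open>x \<in> V\<close>] that by auto
    then show "?nxt u \<in> V - {x}" and "?prv (?nxt u) = u"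
      using that D \<open>x \<in> V\<close> \<open>nxt x \<noteq> x\<close> by auto
  qed
  moreover have "?prv u \<in> V - {x}" and "?nxt (?prv u) = u" if "u \<in> V - {x}" for u
  proof -
    have "prv u \<noteq> prv x" and "u \<noteq> nxt x \<Longrightarrow> prv u \<noteq> x"
      using D(4)[of u] D(4)[OF \<open>x \<in> V\<close>] that by auto
    then show "?prv u \<in> V - {x}" and "?nxt (?prv u) = u"
      using that D \<open>x \<in> V\<close> assms(3) by auto
  qed
  ultimately show ?thesis
    using cycle_on_remove_closed_subset[OF cyc \<open>x \<in> V\<close>] by (simp add: cycle_on_def)
qed

lemma cycle_on_remove_extend:
  assumes cyc: "cycle_on V nxt prv" and "x \<in> V" and "prv x \<noteq> x"
    and "\<And>u. u \<in> V - {x, nxt x} \<Longrightarrow> R u (y (prv u)) (y u)"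
    and "R x (y (prv x)) w" and "R (nxt x) w (y (nxt x))"
  shows "\<forall>u\<in>V. R u ((y(x := w)) (prv u)) ((y(x := w)) u)"
proof
  fix u assume "u \<in> V"
  consider "u = x" | "u = nxt x" | "u \<in> V - {x, nxt x}"
    using \<open>u \<in> V\<close> by blast
  then show "R u ((y(x := w)) (prv u)) ((y(x := w)) u)"
  proof cases
    case 1
    then show ?thesis
      using assms(3,5) by simp
  next
    case 2
    moreover have "nxt x \<noteq> x"
      using cycle_onD(3)[OF cyc \<open>x \<in> V\<close>] assms(3) by auto
    ultimately show ?thesis
      using assms(6) cycle_onD(3)[OF cyc \<open>x \<in> V\<close>] by simp
  next
    case 3
    then have "prv u \<noteq> x"
      using cycle_onD(4)[OF cyc] by force
    with 3 show ?thesis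
      using assms(4) by simp
  qed
qed

lemma predf_lt: "0 < f \<Longrightarrow> predf f i < f"
  by (simp add: predf_def)

lemma predf_Suc_mod: "i < f \<Longrightarrow> predf f (Suc i mod f) = i"
proof (cases "Suc i < f")
  case True
  then show ?thesis
    by (simp add: predf_def)
next
  case False
  moreover assume "i < f"
  ultimately have "Suc i = f"
    by simp
  then show ?thesis
    by (simp add: predf_def)
qed

lemma Suc_predf_mod: "i < f \<Longrightarrow> Suc (predf f i) mod f = i"
proof (cases i)
  case 0
  moreover assume "i < f"
  ultimately show ?thesis
    by (simp add: predf_def)
next
  case (Suc j)
  moreover assume "i < f"
  ultimately have "predf f i = j"
    by (simp add: predf_def)
  then show ?thesis
    using Suc \<open>i < f\<close> by simp
qed

lemma cycle_on_mod:
  assumes "0 < f"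
  shows "cycle_on {..<f} (\<lambda>i. Suc i mod f) (predf f)"
proof -
  have "S = {..<f}" if S: "S \<subseteq> {..<f}" "S \<noteq> {}" "(\<lambda>i. Suc i mod f) ` S \<subseteq> S" for S
  proof -
    obtain s where "s \<in> S"
      using S(2) by blast
    have reach: "(s + k) mod f \<in> S" for k
    proof (induction k)
      case 0
      then show ?case
        using \<open>s \<in> S\<close> S(1) by auto
    next
      case (Suc k)
      then have "Suc ((s + k) mod f) mod f \<in> S"
        using S(3) by blast
      then show ?case
        by (simp add: mod_Suc_eq)
    qed
    have "i \<in> S" if "i < f" for i
    proof -
      have "s < f"
        using \<open>s \<in> S\<close> S(1) by auto
      then have "(s + (i + f - s)) mod f = i"
        using that by simp
      then show ?thesis
        using reach[of "i + f - s"] by simp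
    qed
    then show ?thesis
      using S(1) by auto
  qed
  then show ?thesis
    using assms by (auto simp: cycle_on_def predf_lt predf_Suc_mod Suc_predf_mod)
qed

section \<open>Invariant lines along a cycle of semilinear maps\<close>

context vector_space
begin

text \<open>Around a cycle, surjective maps cannot lower the dimension anywhere, since the total
  dimension would drop; hence they are injective as well.\<close>

lemma cycle_surj_imp_inj:
  assumes cyc: "cycle_on V nxt prv" and "finite V"
    and K: "\<And>u. u \<in> V \<Longrightarrow> subspace (K u) \<and> 0 < dim (K u)"
    and g: "\<And>u. u \<in> V \<Longrightarrow> semilinear_on scale (\<sigma> u) (K (prv u)) (K u) (g u)"
    and surj: "\<And>u. u \<in> V \<Longrightarrow> g u ` K (prv u) = K u"
    and "j \<in> V" and "y \<in> K (prv j)" and "g j y = 0"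
  shows "y = 0"
proof (rule ccontr)
  assume "y \<noteq> 0"
  have K_prv: "subspace (K (prv u)) \<and> 0 < dim (K (prv u))" if "u \<in> V" for u
    using K cycle_onD(2)[OF cyc that] by blast
  have "dim (K u) \<le> dim (K (prv u))" if "u \<in> V" for u
    using dim_semilinear_image_le[OF g[OF that]] K_prv[OF that] surj[OF that] by simp
  moreover have "dim (K j) < dim (K (prv j))"
    using dim_semilinear_image_less[OF g[OF \<open>j \<in> V\<close>] _ _ \<open>y \<in> K (prv j)\<close> \<open>y \<noteq> 0\<close> \<open>g j y = 0\<close>]
      K_prv[OF \<open>j \<in> V\<close>] surj[OF \<open>j \<in> V\<close>] by simp
  ultimately have "(\<Sum>u\<in>V. dim (K u)) < (\<Sum>u\<in>V. dim (K (prv u)))"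
    using \<open>j \<in> V\<close> by (intro sum_strict_mono_ex1[OF \<open>finite V\<close>]) auto
  also have "\<dots> = (\<Sum>u\<in>V. dim (K u))"
    using sum.reindex_bij_betw[OF cycle_on_bij_betw_prv[OF cyc], of "\<lambda>u. dim (K u)"] .
  finally show False
    by simp
qed

end

context prime_char_vector_space
begin

definition invariant_lines
  where "invariant_lines V prv K g x \<longleftrightarrow> (\<forall>u\<in>V. x u \<in> K u \<and> x u \<noteq> 0 \<and> g u (x (prv u)) \<in> span {x u})"

lemma invariant_lines_remove_extend:
  assumes cyc: "cycle_on V nxt prv" and "x \<in> V" and "prv x \<noteq> x"
    and y: "invariant_lines (V - {x}) (prv(nxt x := prv x)) K (g(nxt x := g (nxt x) \<circ> g x)) y"
    and w: "w \<in> K x" "w \<noteq> 0" "g x (y (prv x)) \<in> span {w}" "g (nxt x) w \<in> span {y (nxt x)}"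
  shows "invariant_lines V prv K g (y(x := w))"
proof -
  have "nxt x \<in> V - {x}"
    using cycle_onD(1,3)[OF cyc \<open>x \<in> V\<close>] assms(3) by auto
  then have "y (nxt x) \<in> K (nxt x) \<and> y (nxt x) \<noteq> 0"
    using y by (simp add: invariant_lines_def)
  moreover have "y u \<in> K u \<and> y u \<noteq> 0 \<and> g u (y (prv u)) \<in> span {y u}" if "u \<in> V - {x, nxt x}" for u
    using y[unfolded invariant_lines_def, rule_format, of u] that by simp
  ultimately show ?thesis
    unfolding invariant_lines_def using w
    by (intro cycle_on_remove_extend[OF cyc \<open>x \<in> V\<close> assms(3)]) simp_all
qed

definition semilinear_cycle ::
  "'v set \<Rightarrow> ('v \<Rightarrow> 'v) \<Rightarrow> ('v \<Rightarrow> 'v) \<Rightarrow> ('v \<Rightarrow> 'b set) \<Rightarrow> ('v \<Rightarrow> 'b \<Rightarrow> 'b) \<Rightarrow> ('v \<Rightarrow> int) \<Rightarrow> bool"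
  where "semilinear_cycle V nxt prv K g a \<longleftrightarrow> cycle_on V nxt prv \<and> finite V \<and>
    (\<forall>u\<in>V. subspace (K u) \<and> 0 < dim (K u)) \<and>
    (\<forall>u\<in>V. semilinear_on scale (frob_pow CHAR('a) (a u)) (K (prv u)) (K u) (g u))"

lemma semilinear_cycleD:
  assumes "semilinear_cycle V nxt prv K g a"
  shows "cycle_on V nxt prv" and "finite V"
    and "u \<in> V \<Longrightarrow> subspace (K u)" and "u \<in> V \<Longrightarrow> 0 < dim (K u)"
    and "u \<in> V \<Longrightarrow> semilinear_on scale (frob_pow CHAR('a) (a u)) (K (prv u)) (K u) (g u)"
  using assms by (simp_all add: semilinear_cycle_def)

lemma semilinear_on_remove:
  assumes cyc: "cycle_on V nxt prv" and "x \<in> V" and "prv x \<noteq> x"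
    and g: "\<And>u. u \<in> V \<Longrightarrow> semilinear_on scale (frob_pow CHAR('a) (a u)) (K (prv u)) (K u) (g u)"
    and "u \<in> V - {x}"
  shows "semilinear_on scale (frob_pow CHAR('a) ((a(nxt x := a (nxt x) + a x)) u))
    (K ((prv(nxt x := prv x)) u)) (K u) ((g(nxt x := g (nxt x) \<circ> g x)) u)"
proof (cases "u = nxt x")
  case True
  have "semilinear_on scale (frob_pow CHAR('a) (a (nxt x)) \<circ> frob_pow CHAR('a) (a x))
      (K (prv x)) (K (nxt x)) (g (nxt x) \<circ> g x)"
    using semilinear_on_comp[OF g[OF \<open>x \<in> V\<close>]] g[OF cycle_onD(1)[OF cyc \<open>x \<in> V\<close>]]
      cycle_onD(3)[OF cyc \<open>x \<in> V\<close>] by simp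
  moreover have "frob_pow CHAR('a) (a (nxt x)) \<circ> frob_pow CHAR('a) (a x)
      = (frob_pow CHAR('a) (a (nxt x) + a x) :: 'a \<Rightarrow> 'a)"
    by (rule ext) (simp only: o_apply frob_pow_add[OF prime_char])
  ultimately show ?thesis
    using True by simp
next
  case False
  then show ?thesis
    using g assms(5) by simp
qed

lemma semilinear_cycle_remove:
  assumes sys: "semilinear_cycle V nxt prv K g a" and "x \<in> V" and "prv x \<noteq> x"
  shows "semilinear_cycle (V - {x}) (nxt(prv x := nxt x)) (prv(nxt x := prv x)) K
    (g(nxt x := g (nxt x) \<circ> g x)) (a(nxt x := a (nxt x) + a x))"
proof -
  note D = semilinear_cycleD[OF sys]
  show ?thesis
    unfolding semilinear_cycle_def
    using cycle_on_remove[OF D(1) assms(2,3)] D(2,3,4)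
      semilinear_on_remove[where K = K and g = g and a = a, OF D(1) assms(2,3) D(5)]
    by simp
qed

lemma semilinear_cycle_lines_singleton:
  assumes sys: "semilinear_cycle V nxt prv K g a" and "x \<in> V" and "prv x = x"
  shows "\<exists>y. invariant_lines V prv K g y"
proof -
  note D = semilinear_cycleD[OF sys]
  obtain w where "w \<in> K x" "w \<noteq> 0" "g x w \<in> span {w}"
    using semilinear_eigenvector_exists[OF _ D(3,4)[OF \<open>x \<in> V\<close>]] D(5)[OF \<open>x \<in> V\<close>] assms(3) by auto
  moreover have "V = {x}"
    by (rule cycle_on_fixed_point[OF D(1) assms(2,3)])
  ultimately show ?thesis
    using assms(3) by (intro exI[of _ "\<lambda>_. w"]) (simp add: invariant_lines_def)
qed

text \<open>If \<open>g j\<close> vanishes, merge \<open>prv j\<close> into its neighbours; the merged map at \<open>j\<close> still vanishes.\<close>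

lemma semilinear_cycle_lines_of_zero:
  assumes "semilinear_cycle V nxt prv K g a" and "j \<in> V" and "\<forall>y\<in>K (prv j). g j y = 0"
  shows "\<exists>y. invariant_lines V prv K g y"
  using assms
proof (induction "card V" arbitrary: V nxt prv g a rule: less_induct)
  case less
  note sys = less.prems(1) and zero = less.prems(3)
  note D = semilinear_cycleD[OF sys]
  show ?case
  proof (cases "prv j = j")
    case True
    then show ?thesis
      by (rule semilinear_cycle_lines_singleton[OF sys \<open>j \<in> V\<close>])
  next
    case False
    define x where "x = prv j"
    have x: "x \<in> V" "nxt x = j" "prv x \<noteq> x"
      using cycle_onD(2,4)[OF D(1) \<open>j \<in> V\<close>] cycle_on_fixed_point[OF D(1), of x] False \<open>j \<in> V\<close>
      unfolding x_def by auto
    have "j \<in> V - {x}" and "prv x \<in> V - {x}"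
      using \<open>j \<in> V\<close> False x(3) cycle_onD(2)[OF D(1) x(1)] unfolding x_def by auto
    have "\<forall>y\<in>K ((prv(j := prv x)) j). (g(j := g j \<circ> g x)) j y = 0"
      using zero semilinear_on_into[OF D(5)[OF x(1)]] unfolding x_def by simp
    then obtain y where y: "invariant_lines (V - {x}) (prv(j := prv x)) K (g(j := g j \<circ> g x)) y"
      using less.hyps[OF card_Diff1_less[OF D(2) x(1)] semilinear_cycle_remove[OF sys x(1,3)]]
        \<open>j \<in> V - {x}\<close> x(2) by blast
    have "y (prv x) \<in> K (prv x)"
      using y \<open>prv x \<in> V - {x}\<close> by (simp add: invariant_lines_def)
    then have gy: "g x (y (prv x)) \<in> K x"
      using semilinear_on_into[OF D(5)[OF x(1)]] by blast
    obtain w where w: "w \<in> K x" "w \<noteq> 0" "g x (y (prv x)) \<in> span {w}"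
    proof (cases "g x (y (prv x)) = 0")
      case True
      obtain k where "k \<in> K x" "k \<noteq> 0"
        using dim_pos_imp_nonzero[OF D(4)[OF x(1)]] .
      then show ?thesis
        using that[of k] True span_zero[of "{k}"] by simp
    qed (use that gy span_base[of "g x (y (prv x))" "{g x (y (prv x))}"] in blast)
    moreover have "g (nxt x) w \<in> span {y (nxt x)}"
      using zero w(1) x(2) span_zero unfolding x_def by simp
    ultimately show ?thesis
      using invariant_lines_remove_extend[OF D(1) x(1,3)] y x(2) by blast
  qed
qed

lemma semilinear_cycle_lines_of_inj:
  assumes "semilinear_cycle V nxt prv K g a" and "\<forall>u\<in>V. \<forall>y\<in>K (prv u). g u y = 0 \<longrightarrow> y = 0"
  shows "\<exists>y. invariant_lines V prv K g y"
  using assms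
proof (induction "card V" arbitrary: V nxt prv g a rule: less_induct)
  case less
  note sys = less.prems(1) and inj = less.prems(2)
  note D = semilinear_cycleD[OF sys]
  show ?case
  proof (cases "V = {}")
    case False
    then obtain x where "x \<in> V"
      by blast
    show ?thesis
    proof (cases "prv x = x")
      case True
      then show ?thesis
        by (rule semilinear_cycle_lines_singleton[OF sys \<open>x \<in> V\<close>])
    next
      case False
      have "nxt x \<in> V - {x}" and "prv x \<in> V - {x}"
        using cycle_onD[OF D(1) \<open>x \<in> V\<close>] False by auto
      have "\<forall>u\<in>V - {x}. \<forall>y\<in>K ((prv(nxt x := prv x)) u). (g(nxt x := g (nxt x) \<circ> g x)) u y = 0 \<longrightarrow> y = 0"
        using inj semilinear_on_into[OF D(5)[OF \<open>x \<in> V\<close>]] \<open>nxt x \<in> V - {x}\<close>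
          cycle_onD(3)[OF D(1) \<open>x \<in> V\<close>] \<open>x \<in> V\<close> by auto
      then obtain y where y: "invariant_lines (V - {x}) (prv(nxt x := prv x)) K (g(nxt x := g (nxt x) \<circ> g x)) y"
        using less.hyps[OF card_Diff1_less[OF D(2) \<open>x \<in> V\<close>] semilinear_cycle_remove[OF sys \<open>x \<in> V\<close> False]]
        by blast
      have "y (prv x) \<in> K (prv x)" "y (prv x) \<noteq> 0" "(g (nxt x) \<circ> g x) (y (prv x)) \<in> span {y (nxt x)}"
        using y[unfolded invariant_lines_def, rule_format, OF \<open>prv x \<in> V - {x}\<close>]
          y[unfolded invariant_lines_def, rule_format, OF \<open>nxt x \<in> V - {x}\<close>] False by simp_all
      moreover from this have "g x (y (prv x)) \<in> K x" and "g x (y (prv x)) \<noteq> 0"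
        using semilinear_on_into[OF D(5)[OF \<open>x \<in> V\<close>]] inj \<open>x \<in> V\<close> by auto
      ultimately show ?thesis
        using invariant_lines_remove_extend[OF D(1) \<open>x \<in> V\<close> False y, of "g x (y (prv x))"]
          span_base[of "g x (y (prv x))" "{g x (y (prv x))}"] by auto
    qed
  qed (auto simp: invariant_lines_def)
qed

lemma semilinear_cycle_images:
  assumes sys: "semilinear_cycle V nxt prv K g a" and nonzero: "\<forall>u\<in>V. \<exists>y\<in>K (prv u). g u y \<noteq> 0"
  shows "semilinear_cycle V nxt prv (\<lambda>u. g u ` K (prv u)) g a"
proof -
  note D = semilinear_cycleD[OF sys]
  have sub: "g u ` K (prv u) \<subseteq> K u" if "u \<in> V" for u
    using semilinear_on_into[OF D(5)[OF that]] by blast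
  have "subspace (g u ` K (prv u))" if "u \<in> V" for u
    by (rule subspace_semilinear_image[OF D(5)[OF that] D(3)[OF cycle_onD(2)[OF D(1) that]]
          surj_frob_pow[OF prime_char]])
  moreover have "0 < dim (g u ` K (prv u))" if u: "u \<in> V" for u
  proof -
    obtain y where "y \<in> K (prv u)" "g u y \<noteq> 0"
      using nonzero u by blast
    then show ?thesis
      using dim_pos_of_nonzero[OF sub[OF u] D(4)[OF u], of "g u y"] by simp
  qed
  moreover have "semilinear_on scale (frob_pow CHAR('a) (a u)) (g (prv u) ` K (prv (prv u))) (g u ` K (prv u)) (g u)"
    if "u \<in> V" for u
    using semilinear_on_subset[OF D(5)[OF that] sub[OF cycle_onD(2)[OF D(1) that]]
        image_mono[OF sub[OF cycle_onD(2)[OF D(1) that]]]] .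
  ultimately show ?thesis
    using D(1,2) by (simp add: semilinear_cycle_def)
qed

lemma semilinear_cycle_lines:
  assumes "semilinear_cycle V nxt prv K g a"
  shows "\<exists>y. invariant_lines V prv K g y"
  using assms
proof (induction "\<Sum>u\<in>V. dim (K u)" arbitrary: K rule: less_induct)
  case less
  note sys = less.prems and D = semilinear_cycleD[OF less.prems]
  consider (zero) j where "j \<in> V" "\<forall>y\<in>K (prv j). g j y = 0"
    | (surj) "\<forall>u\<in>V. g u ` K (prv u) = K u"
    | (shrink) j where "j \<in> V" "g j ` K (prv j) \<noteq> K j" "\<forall>u\<in>V. \<exists>y\<in>K (prv u). g u y \<noteq> 0"
    by blast
  then show ?case
  proof cases
    case zero
    then show ?thesis
      by (rule semilinear_cycle_lines_of_zero[OF sys])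
  next
    case surj
    have "y = 0" if "u \<in> V" "y \<in> K (prv u)" "g u y = 0" for u y
      by (rule cycle_surj_imp_inj[where K = K and g = g, OF D(1,2) _ D(5) _ that])
        (use D(3,4) surj in simp_all)
    then show ?thesis
      by (intro semilinear_cycle_lines_of_inj[OF sys]) blast
  next
    case shrink
    let ?U = "\<lambda>u. g u ` K (prv u)"
    note U = semilinear_cycleD[OF semilinear_cycle_images[OF sys shrink(3)]]
    have sub: "?U u \<subseteq> K u" if "u \<in> V" for u
      using semilinear_on_into[OF D(5)[OF that]] by blast
    have le: "dim (?U u) \<le> dim (K u)" if "u \<in> V" for u
      by (rule dim_subset_pos[OF sub[OF that] D(4)[OF that]])
    moreover have "dim (?U j) < dim (K j)"
      using le[OF shrink(1)] subspace_eq_of_dim_eq[OF U(3)[OF shrink(1)] sub[OF shrink(1)] D(4)[OF shrink(1)]]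
        shrink(2) by linarith
    ultimately have "(\<Sum>u\<in>V. dim (?U u)) < (\<Sum>u\<in>V. dim (K u))"
      using \<open>j \<in> V\<close> by (intro sum_strict_mono_ex1[OF D(2)]) blast+
    then obtain y where y: "invariant_lines V prv ?U g y"
      using less.hyps[OF _ semilinear_cycle_images[OF sys shrink(3)]] by blast
    with sub show ?thesis
      unfolding invariant_lines_def by blast
  qed
qed

end

section \<open>Pairs of maps with vanishing composites\<close>

context prime_char_vector_space
begin

definition semilinear_pair_cycle ::
  "'v set \<Rightarrow> ('v \<Rightarrow> 'v) \<Rightarrow> ('v \<Rightarrow> 'b set) \<Rightarrow> ('v \<Rightarrow> 'b \<Rightarrow> 'b) \<Rightarrow> ('v \<Rightarrow> 'b \<Rightarrow> 'b) \<Rightarrow>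
    ('v \<Rightarrow> int) \<Rightarrow> ('v \<Rightarrow> int) \<Rightarrow> nat \<Rightarrow> bool"
  where "semilinear_pair_cycle V prv W \<phi> \<psi> a b m \<longleftrightarrow>
    (\<forall>u\<in>V. subspace (W u) \<and> dim (W u) = m) \<and>
    (\<forall>u\<in>V. semilinear_on scale (frob_pow CHAR('a) (a u)) (W (prv u)) (W u) (\<phi> u)) \<and>
    (\<forall>u\<in>V. semilinear_on scale (frob_pow CHAR('a) (b u)) (W u) (W (prv u)) (\<psi> u)) \<and>
    (\<forall>u\<in>V. \<forall>y\<in>W (prv u). \<psi> u (\<phi> u y) = 0) \<and>
    (\<forall>u\<in>V. \<forall>y\<in>W u. \<phi> u (\<psi> u y) = 0)"

definition invariant_line_pairs
  where "invariant_line_pairs V prv W \<phi> \<psi> x \<longleftrightarrow>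
    invariant_lines V prv W \<phi> x \<and> (\<forall>u\<in>V. \<psi> u (x u) \<in> span {x (prv u)})"

lemma semilinear_pair_cycleD:
  assumes "semilinear_pair_cycle V prv W \<phi> \<psi> a b m" and "u \<in> V"
  shows "subspace (W u)" and "dim (W u) = m"
    and "semilinear_on scale (frob_pow CHAR('a) (a u)) (W (prv u)) (W u) (\<phi> u)"
    and "semilinear_on scale (frob_pow CHAR('a) (b u)) (W u) (W (prv u)) (\<psi> u)"
    and "y \<in> W (prv u) \<Longrightarrow> \<psi> u (\<phi> u y) = 0" and "y \<in> W u \<Longrightarrow> \<phi> u (\<psi> u y) = 0"
  using assms by (simp_all add: semilinear_pair_cycle_def)

lemma semilinear_pair_cycle_reverse:
  assumes "semilinear_pair_cycle V prv W \<phi> \<psi> a b m" and cyc: "cycle_on V nxt prv"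
  shows "semilinear_pair_cycle V nxt W (\<lambda>t. \<psi> (nxt t)) (\<lambda>t. \<phi> (nxt t)) (\<lambda>t. b (nxt t)) (\<lambda>t. a (nxt t)) m"
  using semilinear_pair_cycleD[OF assms(1) cycle_onD(1)[OF cyc]] semilinear_pair_cycleD(1,2)[OF assms(1)]
    cycle_onD(3)[OF cyc]
  by (simp add: semilinear_pair_cycle_def)

lemma semilinear_pair_cycle_lines_of_ker:
  assumes sys: "semilinear_pair_cycle V prv W \<phi> \<psi> a b m"
    and cyc: "cycle_on V nxt prv" and fin: "finite V" and "0 < m"
    and ker: "\<forall>u\<in>V. \<exists>y\<in>W u. y \<noteq> 0 \<and> \<psi> u y = 0"
  shows "\<exists>x. invariant_lines V prv W \<phi> x \<and> (\<forall>u\<in>V. \<psi> u (x u) = 0)"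
proof -
  define K where "K u = {y \<in> W u. \<psi> u y = 0}" for u
  note D = semilinear_pair_cycleD[OF sys]
  have K: "subspace (K u) \<and> 0 < dim (K u)" if u: "u \<in> V" for u
  proof
    show "subspace (K u)"
      unfolding K_def by (rule subspace_semilinear_kernel[OF D(4)[OF u] D(1)[OF u]])
    obtain y where "y \<in> W u" "y \<noteq> 0" "\<psi> u y = 0"
      using ker u by blast
    then show "0 < dim (K u)"
      using dim_pos_of_nonzero[of "K u" "W u" y] D(2)[OF u] \<open>0 < m\<close> unfolding K_def by auto
  qed
  have "semilinear_on scale (frob_pow CHAR('a) (a u)) (K (prv u)) (K u) (\<phi> u)" if "u \<in> V" for u
  proof (rule semilinear_on_subset[OF D(3)[OF that]])
    show "K (prv u) \<subseteq> W (prv u)"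
      unfolding K_def by blast
    show "\<phi> u ` K (prv u) \<subseteq> K u"
      using semilinear_on_into[OF D(3)[OF that]] D(5)[OF that] unfolding K_def by auto
  qed
  then have "semilinear_cycle V nxt prv K \<phi> a"
    using cyc fin K by (simp add: semilinear_cycle_def)
  then obtain x where "invariant_lines V prv K \<phi> x"
    using semilinear_cycle_lines by blast
  then show ?thesis
    unfolding K_def invariant_lines_def by blast
qed

lemma semilinear_pair_cycle_lines_of_coker:
  assumes sys: "semilinear_pair_cycle V prv W \<phi> \<psi> a b m"
    and cyc: "cycle_on V nxt prv" and fin: "finite V" and "0 < m"
    and ker: "\<forall>u\<in>V. \<exists>y\<in>W (prv u). y \<noteq> 0 \<and> \<phi> u y = 0"
  shows "\<exists>x. invariant_line_pairs V prv W \<phi> \<psi> x"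
proof -
  have "\<forall>t\<in>V. \<exists>y\<in>W t. y \<noteq> 0 \<and> \<phi> (nxt t) y = 0"
    using ker cycle_onD(1,3)[OF cyc] by fastforce
  then obtain x where x: "invariant_lines V nxt W (\<lambda>t. \<psi> (nxt t)) x" "\<forall>t\<in>V. \<phi> (nxt t) (x t) = 0"
    using semilinear_pair_cycle_lines_of_ker[OF semilinear_pair_cycle_reverse[OF sys cyc]
        cycle_on_reverse[OF cyc] fin \<open>0 < m\<close>] by blast
  have "x u \<in> W u \<and> x u \<noteq> 0 \<and> \<phi> u (x (prv u)) \<in> span {x u} \<and> \<psi> u (x u) \<in> span {x (prv u)}"
    if "u \<in> V" for u
    using x(1)[unfolded invariant_lines_def, rule_format, OF cycle_onD(2)[OF cyc that]]
      x(1)[unfolded invariant_lines_def, rule_format, OF that] x(2)[rule_format, OF cycle_onD(2)[OF cyc that]] cycle_onD(4)[OF cyc that] span_zero[of "{x u}"] by simp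
  then show ?thesis
    unfolding invariant_line_pairs_def invariant_lines_def by blast
qed

lemma semilinear_pair_cycle_inv:
  assumes sys: "semilinear_pair_cycle V prv W \<phi> \<psi> a b m"
    and cyc: "cycle_on V nxt prv" and "x \<in> V" and "0 < m"
    and inj: "\<forall>y\<in>W (prv x). \<phi> x y = 0 \<longrightarrow> y = 0"
  shows "\<phi> x ` W (prv x) = W x"
    and "semilinear_on scale (frob_pow CHAR('a) (- a x)) (W x) (W (prv x)) (inv_into (W (prv x)) (\<phi> x))"
    and "\<And>t. t \<in> W x \<Longrightarrow> \<phi> x (inv_into (W (prv x)) (\<phi> x) t) = t"
proof -
  note D = semilinear_pair_cycleD[OF sys]
  have "prv x \<in> V"
    using cycle_onD(2)[OF cyc \<open>x \<in> V\<close>] .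
  show surj: "\<phi> x ` W (prv x) = W x"
    using semilinear_inj_imp_surj[OF D(3)[OF \<open>x \<in> V\<close>] surj_frob_pow[OF prime_char]] inj
      D(1,2)[OF \<open>x \<in> V\<close>] D(1,2)[OF \<open>prv x \<in> V\<close>] \<open>0 < m\<close> by simp
  moreover have "inj_on (\<phi> x) (W (prv x))"
    using semilinear_on_inj_onI[OF D(3)[OF \<open>x \<in> V\<close>] D(1)[OF \<open>prv x \<in> V\<close>]] inj by blast
  ultimately have "bij_betw (\<phi> x) (W (prv x)) (W x)"
    by (simp add: bij_betw_def)
  then show "semilinear_on scale (frob_pow CHAR('a) (- a x)) (W x) (W (prv x)) (inv_into (W (prv x)) (\<phi> x))"
    by (rule semilinear_on_inv_into[OF D(3)[OF \<open>x \<in> V\<close>] D(1)[OF \<open>prv x \<in> V\<close>] _ frob_pow_inverse[OF prime_char]])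
  show "\<phi> x (inv_into (W (prv x)) (\<phi> x) t) = t" if "t \<in> W x" for t
    using that surj by (simp add: f_inv_into_f)
qed

lemma semilinear_pair_cycle_remove:
  assumes sys: "semilinear_pair_cycle V prv W \<phi> \<psi> a b m"
    and cyc: "cycle_on V nxt prv" and "x \<in> V" and "prv x \<noteq> x" and "0 < m"
    and inj: "\<forall>y\<in>W (prv x). \<phi> x y = 0 \<longrightarrow> y = 0"
  shows "semilinear_pair_cycle (V - {x}) (prv(nxt x := prv x)) W
    (\<phi>(nxt x := \<phi> (nxt x) \<circ> \<phi> x)) (\<psi>(nxt x := inv_into (W (prv x)) (\<phi> x) \<circ> \<psi> (nxt x)))
    (a(nxt x := a (nxt x) + a x)) (b(nxt x := - a x + b (nxt x))) m"
proof -
  note D = semilinear_pair_cycleD[OF sys]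
  note inv = semilinear_pair_cycle_inv[OF sys cyc \<open>x \<in> V\<close> \<open>0 < m\<close> inj]
  define z where "z = nxt x"
  have z: "z \<in> V" "prv z = x"
    using cycle_onD(1,3)[OF cyc \<open>x \<in> V\<close>] unfolding z_def by simp_all
  have \<psi>z: "semilinear_on scale (frob_pow CHAR('a) (- a x + b z)) (W z) (W (prv x))
      (inv_into (W (prv x)) (\<phi> x) \<circ> \<psi> z)"
  proof -
    have "frob_pow CHAR('a) (- a x) \<circ> frob_pow CHAR('a) (b z) = (frob_pow CHAR('a) (- a x + b z) :: 'a \<Rightarrow> 'a)"
      by (rule ext) (simp only: o_apply frob_pow_add[OF prime_char])
    then show ?thesis
      using semilinear_on_comp[OF D(4)[OF z(1), unfolded z(2)] inv(2)] by simp
  qed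
  have "\<psi> z (\<phi> z (\<phi> x y)) = 0" if "y \<in> W (prv x)" for y
    using D(5)[OF z(1)] semilinear_on_into[OF D(3)[OF \<open>x \<in> V\<close>] that] z(2) by simp
  then have \<psi>\<phi>z: "inv_into (W (prv x)) (\<phi> x) (\<psi> z (\<phi> z (\<phi> x y))) = 0" if "y \<in> W (prv x)" for y
    using that semilinear_on_zero[OF inv(2) D(1)[OF \<open>x \<in> V\<close>]] by simp
  have \<phi>\<psi>z: "\<phi> z (\<phi> x (inv_into (W (prv x)) (\<phi> x) (\<psi> z y))) = 0" if "y \<in> W z" for y
    using inv(3) semilinear_on_into[OF D(4)[OF z(1)] that] z(2) D(6)[OF z(1) that] by simp
  show ?thesis
    unfolding semilinear_pair_cycle_def z_def[symmetric]
  proof (intro conjI ballI)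
    fix u assume u: "u \<in> V - {x}"
    show "subspace (W u)" and "dim (W u) = m"
      using D(1,2) u by simp_all
    show "semilinear_on scale (frob_pow CHAR('a) ((a(z := a z + a x)) u)) (W ((prv(z := prv x)) u)) (W u)
        ((\<phi>(z := \<phi> z \<circ> \<phi> x)) u)"
      unfolding z_def using semilinear_on_remove[where K = W and g = \<phi> and a = a, OF cyc \<open>x \<in> V\<close> assms(4) D(3) u] .
    show "semilinear_on scale (frob_pow CHAR('a) ((b(z := - a x + b z)) u)) (W u) (W ((prv(z := prv x)) u))
        ((\<psi>(z := inv_into (W (prv x)) (\<phi> x) \<circ> \<psi> z)) u)"
      using \<psi>z D(4) u by simp
    show "(\<psi>(z := inv_into (W (prv x)) (\<phi> x) \<circ> \<psi> z)) u ((\<phi>(z := \<phi> z \<circ> \<phi> x)) u y) = 0"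
      if "y \<in> W ((prv(z := prv x)) u)" for y
      using that \<psi>\<phi>z D(5) u by (cases "u = z") simp_all
    show "(\<phi>(z := \<phi> z \<circ> \<phi> x)) u ((\<psi>(z := inv_into (W (prv x)) (\<phi> x) \<circ> \<psi> z)) u y) = 0"
      if "y \<in> W u" for y
      using that \<phi>\<psi>z D(6) u by (cases "u = z") simp_all
  qed
qed

lemma semilinear_pair_cycle_remove_extend:
  assumes sys: "semilinear_pair_cycle V prv W \<phi> \<psi> a b m"
    and cyc: "cycle_on V nxt prv" and "x \<in> V" and "prv x \<noteq> x" and "0 < m"
    and inj: "\<forall>y\<in>W (prv x). \<phi> x y = 0 \<longrightarrow> y = 0"
    and y: "invariant_line_pairs (V - {x}) (prv(nxt x := prv x)) W
      (\<phi>(nxt x := \<phi> (nxt x) \<circ> \<phi> x)) (\<psi>(nxt x := inv_into (W (prv x)) (\<phi> x) \<circ> \<psi> (nxt x))) y"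
  shows "invariant_line_pairs V prv W \<phi> \<psi> (y(x := \<phi> x (y (prv x))))"
proof -
  note D = semilinear_pair_cycleD[OF sys]
  note inv = semilinear_pair_cycle_inv[OF sys cyc \<open>x \<in> V\<close> \<open>0 < m\<close> inj]
  define z where "z = nxt x"
  define w where "w = \<phi> x (y (prv x))"
  have z: "z \<in> V - {x}" "prv z = x"
    using cycle_onD(1,3)[OF cyc \<open>x \<in> V\<close>] assms(4) unfolding z_def by auto
  have "prv x \<in> V - {x}"
    using cycle_onD(2)[OF cyc \<open>x \<in> V\<close>] assms(4) by simp
  note y_at = y[unfolded invariant_line_pairs_def invariant_lines_def, THEN conjunct1, rule_format]
    y[unfolded invariant_line_pairs_def, THEN conjunct2, rule_format]
  have y0: "y (prv x) \<in> W (prv x)" "y (prv x) \<noteq> 0"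
    using y_at(1)[OF \<open>prv x \<in> V - {x}\<close>] by simp_all
  have w: "w \<in> W x" "w \<noteq> 0"
    using semilinear_on_into[OF D(3)[OF \<open>x \<in> V\<close>] y0(1)] inj y0 unfolding w_def by auto
  have yz: "y z \<in> W z" "y z \<noteq> 0" "\<phi> z w \<in> span {y z}"
    using y_at(1)[OF z(1)] unfolding z_def w_def by simp_all
  obtain k where k: "inv_into (W (prv x)) (\<phi> x) (\<psi> z (y z)) = k *s y (prv x)"
    using y_at(2)[OF z(1)] unfolding z_def by (auto simp: span_singleton)
  have "\<psi> z (y z) \<in> W x"
    using semilinear_on_into[OF D(4)[OF DiffD1[OF z(1)]] yz(1)] z(2) by simp
  then have "\<psi> z (y z) = \<phi> x (k *s y (prv x))"
    using inv(3) k by metis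
  also have "\<dots> = frob_pow CHAR('a) (a x) k *s w"
    using semilinear_on_scale[OF D(3)[OF \<open>x \<in> V\<close>] y0(1)] unfolding w_def .
  finally have "\<psi> z (y z) \<in> span {w}"
    using span_scale[OF span_base[of w "{w}"]] by simp
  have "\<forall>u\<in>V. (\<lambda>u p q. q \<in> W u \<and> q \<noteq> 0 \<and> \<phi> u p \<in> span {q} \<and> \<psi> u q \<in> span {p}) u
      ((y(x := w)) (prv u)) ((y(x := w)) u)"
  proof (rule cycle_on_remove_extend[OF cyc \<open>x \<in> V\<close> assms(4)])
    show "y u \<in> W u \<and> y u \<noteq> 0 \<and> \<phi> u (y (prv u)) \<in> span {y u} \<and> \<psi> u (y u) \<in> span {y (prv u)}"
      if "u \<in> V - {x, nxt x}" for u
      using y_at(1,2)[of u] that by simp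
    show "w \<in> W x \<and> w \<noteq> 0 \<and> \<phi> x (y (prv x)) \<in> span {w} \<and> \<psi> x w \<in> span {y (prv x)}"
      using w D(5)[OF \<open>x \<in> V\<close> y0(1)] span_base[of w "{w}"] span_zero[of "{y (prv x)}"] unfolding w_def by simp
    show "y (nxt x) \<in> W (nxt x) \<and> y (nxt x) \<noteq> 0 \<and> \<phi> (nxt x) w \<in> span {y (nxt x)} \<and> \<psi> (nxt x) (y (nxt x)) \<in> span {w}"
      using yz \<open>\<psi> z (y z) \<in> span {w}\<close> unfolding z_def by simp
  qed
  then show ?thesis
    unfolding invariant_line_pairs_def invariant_lines_def w_def by simp
qed

lemma semilinear_pair_cycle_lines:
  assumes "semilinear_pair_cycle V prv W \<phi> \<psi> a b m" and "cycle_on V nxt prv" and "finite V" and "0 < m"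
  shows "\<exists>x. invariant_line_pairs V prv W \<phi> \<psi> x"
  using assms
proof (induction "card V" arbitrary: V nxt prv \<phi> \<psi> a b rule: less_induct)
  case less
  note sys = less.prems(1) and cyc = less.prems(2) and fin = less.prems(3)
  note D = semilinear_pair_cycleD[OF sys]
  consider (ker) "\<forall>u\<in>V. \<exists>y\<in>W u. y \<noteq> 0 \<and> \<psi> u y = 0"
    | (coker) "\<forall>u\<in>V. \<exists>y\<in>W (prv u). y \<noteq> 0 \<and> \<phi> u y = 0"
    | (inj) e x where "e \<in> V" "\<forall>y\<in>W e. \<psi> e y = 0 \<longrightarrow> y = 0"
        and "x \<in> V" "\<forall>y\<in>W (prv x). \<phi> x y = 0 \<longrightarrow> y = 0"
    by blast
  then show ?case
  proof cases
    case ker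
    then show ?thesis
      using semilinear_pair_cycle_lines_of_ker[OF sys cyc fin \<open>0 < m\<close>] span_zero
      unfolding invariant_line_pairs_def by (metis (no_types, lifting))
  next
    case coker
    then show ?thesis
      by (rule semilinear_pair_cycle_lines_of_coker[OF sys cyc fin \<open>0 < m\<close>])
  next
    case inj
    have "prv x \<noteq> x"
    proof
      assume "prv x = x"
      then have "e = x"
        using cycle_on_fixed_point[OF cyc \<open>x \<in> V\<close>] \<open>e \<in> V\<close> by simp
      obtain y where "y \<in> W x" "y \<noteq> 0"
        using dim_pos_imp_nonzero[of "W x"] D(2)[OF \<open>x \<in> V\<close>] \<open>0 < m\<close> by auto
      moreover obtain y' where "y' \<in> W (prv x)" "y = \<phi> x y'"
        using \<open>y \<in> W x\<close> semilinear_pair_cycle_inv(1)[OF sys cyc \<open>x \<in> V\<close> \<open>0 < m\<close> inj(4)] by blast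
      ultimately show False
        using D(5)[OF \<open>x \<in> V\<close>] inj(2) \<open>e = x\<close> by auto
    qed
    obtain y where "invariant_line_pairs (V - {x}) (prv(nxt x := prv x)) W
      (\<phi>(nxt x := \<phi> (nxt x) \<circ> \<phi> x)) (\<psi>(nxt x := inv_into (W (prv x)) (\<phi> x) \<circ> \<psi> (nxt x))) y"
      using less.hyps[OF card_Diff1_less[OF fin \<open>x \<in> V\<close>]
          semilinear_pair_cycle_remove[OF sys cyc \<open>x \<in> V\<close> \<open>prv x \<noteq> x\<close> \<open>0 < m\<close> inj(4)]
          cycle_on_remove[OF cyc \<open>x \<in> V\<close> \<open>prv x \<noteq> x\<close>]] fin \<open>0 < m\<close> by auto
    then show ?thesis
      using semilinear_pair_cycle_remove_extend[OF sys cyc \<open>x \<in> V\<close> \<open>prv x \<noteq> x\<close> \<open>0 < m\<close> inj(4)] by blast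
  qed
qed

lemma semilinear_pair_cycle_line_spans:
  assumes sys: "semilinear_pair_cycle V prv W \<phi> \<psi> a b m" and x: "invariant_line_pairs V prv W \<phi> \<psi> x"
    and "u \<in> V" and "prv u \<in> V"
  shows "subspace (span {x u})" and "span {x u} \<subseteq> W u" and "dim (span {x u}) = 1"
    and "\<phi> u ` span {x (prv u)} \<subseteq> span {x u}" and "\<psi> u ` span {x u} \<subseteq> span {x (prv u)}"
proof -
  note D = semilinear_pair_cycleD[OF sys \<open>u \<in> V\<close>]
  note x_at = x[unfolded invariant_line_pairs_def invariant_lines_def, THEN conjunct1, rule_format]
    x[unfolded invariant_line_pairs_def, THEN conjunct2, rule_format]
  show "subspace (span {x u})" and "span {x u} \<subseteq> W u" and "dim (span {x u}) = 1"
    using x_at(1)[OF \<open>u \<in> V\<close>] span_minimal[of "{x u}" "W u"] D(1) dim_span_singleton by auto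
  show "\<phi> u ` span {x (prv u)} \<subseteq> span {x u}" and "\<psi> u ` span {x u} \<subseteq> span {x (prv u)}"
    using semilinear_image_span_singleton[OF D(3)] semilinear_image_span_singleton[OF D(4)]
      x_at(1)[OF \<open>u \<in> V\<close>] x_at(1)[OF \<open>prv u \<in> V\<close>] x_at(2)[OF \<open>u \<in> V\<close>] by simp_all
qed

end

theorem theorem6p1:
  fixes scale :: "'k::alg_closed_field \<Rightarrow> 'v::ab_group_add \<Rightarrow> 'v"
    and p f m :: nat
    and W :: "nat \<Rightarrow> 'v set"
    and \<phi> \<psi> :: "nat \<Rightarrow> 'v \<Rightarrow> 'v"
    and a b :: "nat \<Rightarrow> int"
  assumes vs: "vector_space scale"
    and p: "prime p" "CHAR('k) = p"
    and f: "f \<ge> 1"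
    and m: "m > 0"
    and W: "\<And>i. i < f \<Longrightarrow> module.subspace scale (W i)"
    and Wdim: "\<And>i. i < f \<Longrightarrow> vector_space.dim scale (W i) = m"
    and \<phi>: "\<And>i. i < f \<Longrightarrow> semilinear_on scale (frob_pow p (a i)) (W (predf f i)) (W i) (\<phi> i)"
    and \<psi>: "\<And>i. i < f \<Longrightarrow> semilinear_on scale (frob_pow p (b i)) (W i) (W (predf f i)) (\<psi> i)"
    and \<psi>\<phi>: "\<And>i x. i < f \<Longrightarrow> x \<in> W (predf f i) \<Longrightarrow> \<psi> i (\<phi> i x) = 0"
    and \<phi>\<psi>: "\<And>i y. i < f \<Longrightarrow> y \<in> W i \<Longrightarrow> \<phi> i (\<psi> i y) = 0"
  shows "\<exists>L :: nat \<Rightarrow> 'v set.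
           (\<forall>i<f. module.subspace scale (L i) \<and> L i \<subseteq> W i
                  \<and> vector_space.dim scale (L i) = 1)
         \<and> (\<forall>i<f. \<phi> i ` L (predf f i) \<subseteq> L i \<and> \<psi> i ` L i \<subseteq> L (predf f i))"
proof -
  interpret prime_char_vector_space scale
    using vs p by (simp add: prime_char_vector_space_def prime_char_vector_space_axioms_def
        alg_closed_vector_space_def)
  have sys: "semilinear_pair_cycle {..<f} (predf f) W \<phi> \<psi> a b m"
    using W Wdim \<phi> \<psi> \<psi>\<phi> \<phi>\<psi> p(2) by (simp add: semilinear_pair_cycle_def)
  then obtain x where x: "invariant_line_pairs {..<f} (predf f) W \<phi> \<psi> x"
    using semilinear_pair_cycle_lines[OF _ cycle_on_mod] f m by fastforce
  show ?thesis
    using semilinear_pair_cycle_line_spans[OF sys x] predf_lt[of f] f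
    by (intro exI[of _ "\<lambda>i. span {x i}"]) auto
qed

end
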